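(* For every integer $n\ge0$, the Franel number $\sum_{k=0}^n\binom{n}{k}^3$ equals the coefficient of $x_1^nx_2^nx_3^n$ in the Taylor expansion of $$\frac{1}{1-(x_1+x_2+x_3)+4x_1x_2x_3}.$$ Moreover, for $n_1,n_2,n_3\ge0$, the coefficient of $x_1^{n_1}x_2^{n_2}x_3^{n_3}$ in this rational function equals the coefficient of $x_1^{n_1}x_2^{n_2}x_3^{n_3}$ in $(x_1-x_2-x_3)^{n_1}(x_2-x_1-x_3)^{n_2}(x_3-x_1-x_2)^{n_3}$. *)

theory Defs
  imports "HOL-Computational_Algebra.Formal_Power_Series"
begin

text \<open>Formal power series in three variables x1, x2, x3 over the rationals, encoded as
  nested univariate formal power series: x1 is the outermost variable, x3 the innermost.\<close>

type_synonym fps3 = "rat fps fps fps"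

definition X1 :: fps3 where "X1 = fps_X"
definition X2 :: fps3 where "X2 = fps_const fps_X"
definition X3 :: fps3 where "X3 = fps_const (fps_const fps_X)"

definition coeff3 :: "fps3 \<Rightarrow> nat \<Rightarrow> nat \<Rightarrow> nat \<Rightarrow> rat" where
  "coeff3 F a b c = fps_nth (fps_nth (fps_nth F a) b) c"

definition franel_gf :: fps3 where
  "franel_gf = inverse (1 - (X1 + X2 + X3) + 4 * X1 * X2 * X3)"

end

theory Submission
  imports Defs
begin

(* A series in three variables is determined by its coefficients, and
   F * (1 - x1 - x2 - x3 + 4 x1 x2 x3) = 1 is a linear recurrence for them; so every
   description of the coefficients of the generating function is verified by checking
   this recurrence.

   Writing x1 - x2 - x3 = 2 x1 - s with s = x1 + x2 + x3 and expanding, the coefficient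
   of x1^a x2^b x3^c in the product of linear forms is a binomial transform, in each of
   the three variables, of the coefficients of 1/(1 + s).  The transform in x_i
   intertwines multiplication by x_i with multiplication by x_i/(1 - 2 x_i), and the
   denominator is (1-2x1)(1-2x2)(1-2x3) plus the three terms x_i times the product of
   the other two factors 1 - 2 x_j; together these carry the recurrence of 1/(1 + s) to
   the recurrence of the generating function.

   Expanding the generating function as a geometric series in s - 4 x1 x2 x3 gives its
   coefficients as alternating sums of multinomial coefficients; on the diagonal this is
   the sum over i of (-4)^(n-i) (n+2i)! / ((n-i)! i!^3).  This sum and the sum of
   C(n,k)^3 both satisfy Franel's recurrence
     (n+2)^2 u(n+2) = (7n^2 + 21n + 16) u(n+1) + 8 (n+1)^2 u(n)
   by creative telescoping with explicit certificates, and they agree for n = 0, 1. *)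

unbundle fps_syntax

section \<open>Coefficients of series in three variables\<close>

abbreviation const3 :: "rat \<Rightarrow> fps3" where
  "const3 r \<equiv> fps_const (fps_const (fps_const r))"

lemma coeff3_eqI: "(\<And>a b c. coeff3 F a b c = coeff3 G a b c) \<Longrightarrow> F = G"
  unfolding coeff3_def by (intro fps_ext) simp

lemma coeff3_add [simp]: "coeff3 (F + G) a b c = coeff3 F a b c + coeff3 G a b c"
  by (simp add: coeff3_def)

lemma coeff3_diff [simp]: "coeff3 (F - G) a b c = coeff3 F a b c - coeff3 G a b c"
  by (simp add: coeff3_def)

lemma coeff3_minus [simp]: "coeff3 (- F) a b c = - coeff3 F a b c"
  by (simp add: coeff3_def)

lemma coeff3_1 [simp]: "coeff3 1 a b c = (if a = 0 \<and> b = 0 \<and> c = 0 then 1 else 0)"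
  by (simp add: coeff3_def)

lemma coeff3_sum: "coeff3 (sum f A) a b c = (\<Sum>i\<in>A. coeff3 (f i) a b c)"
  by (simp add: coeff3_def fps_sum_nth)

lemma coeff3_const3_mult [simp]: "coeff3 (const3 r * F) a b c = r * coeff3 F a b c"
  by (simp add: coeff3_def)

lemma coeff3_X1_power_mult: "coeff3 (X1 ^ p * F) a b c = (if a < p then 0 else coeff3 F (a - p) b c)"
  by (simp add: coeff3_def X1_def fps_X_power_mult_nth)

lemma coeff3_X2_power_mult: "coeff3 (X2 ^ p * F) a b c = (if b < p then 0 else coeff3 F a (b - p) c)"
  by (simp add: coeff3_def X2_def fps_X_power_mult_nth)

lemma coeff3_X3_power_mult: "coeff3 (X3 ^ p * F) a b c = (if c < p then 0 else coeff3 F a b (c - p))"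
  by (simp add: coeff3_def X3_def fps_X_power_mult_nth)

lemma coeff3_X1_mult [simp]: "coeff3 (X1 * F) a b c = (if a = 0 then 0 else coeff3 F (a - 1) b c)"
  using coeff3_X1_power_mult[of 1] by simp

lemma coeff3_X2_mult [simp]: "coeff3 (X2 * F) a b c = (if b = 0 then 0 else coeff3 F a (b - 1) c)"
  using coeff3_X2_power_mult[of 1] by simp

lemma coeff3_X3_mult [simp]: "coeff3 (X3 * F) a b c = (if c = 0 then 0 else coeff3 F a b (c - 1))"
  using coeff3_X3_power_mult[of 1] by simp

lemma numeral_fps3: "(numeral k :: fps3) = const3 (numeral k)"
  by (simp add: numeral_fps_const)

lemma of_nat_fps3: "(of_nat k :: fps3) = const3 (of_nat k)"
  by (simp add: fps_of_nat)

definition franel_denom :: fps3 where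
  "franel_denom = 1 - (X1 + X2 + X3) + 4 * X1 * X2 * X3"

lemma fps_mult_inverse_eq_1:
  fixes f :: "'a::{ring_1,inverse} fps"
  assumes "f $ 0 * inverse (f $ 0) = 1"
  shows "f * inverse f = 1"
  using fps_right_inverse[OF assms] by (simp add: fps_inverse_def)

lemma franel_denom_mult_franel_gf: "franel_denom * franel_gf = 1"
  unfolding franel_gf_def franel_denom_def[symmetric]
  by (intro fps_mult_inverse_eq_1) (simp add: franel_denom_def X1_def X2_def X3_def numeral_fps_const)

lemma eq_franel_gfI:
  assumes "D * franel_denom = 1"
  shows "D = franel_gf"
  by (metis assms franel_denom_mult_franel_gf mult.assoc mult_1_left mult_1_right)


section \<open>Coefficient arrays and the recurrence of the denominator\<close>

type_synonym array3 = "nat \<Rightarrow> nat \<Rightarrow> nat \<Rightarrow> rat"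

definition series3 :: "array3 \<Rightarrow> fps3" where
  "series3 f = Abs_fps (\<lambda>a. Abs_fps (\<lambda>b. Abs_fps (\<lambda>c. f a b c)))"

lemma coeff3_series3 [simp]: "coeff3 (series3 f) = f"
  by (simp add: fun_eq_iff series3_def coeff3_def)

definition shift1 :: "array3 \<Rightarrow> array3" where
  "shift1 f a b c = (if a = 0 then 0 else f (a - 1) b c)"

definition shift2 :: "array3 \<Rightarrow> array3" where
  "shift2 f a b c = (if b = 0 then 0 else f a (b - 1) c)"

definition shift3 :: "array3 \<Rightarrow> array3" where
  "shift3 f a b c = (if c = 0 then 0 else f a b (c - 1))"

definition unit3 :: array3 where
  "unit3 a b c = (if a = 0 \<and> b = 0 \<and> c = 0 then 1 else 0)"

definition franel_op :: "array3 \<Rightarrow> array3" where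
  "franel_op f a b c = f a b c - shift1 f a b c - shift2 f a b c - shift3 f a b c
     + 4 * shift1 (shift2 (shift3 f)) a b c"

lemma coeff3_mult_franel_denom: "coeff3 (F * franel_denom) a b c = franel_op (coeff3 F) a b c"
proof -
  have "F * franel_denom = F - X1 * F - X2 * F - X3 * F + const3 4 * (X1 * (X2 * (X3 * F)))"
    by (simp add: franel_denom_def numeral_fps3 algebra_simps)
  then show ?thesis
    by (simp add: franel_op_def shift1_def shift2_def shift3_def)
qed

lemma series3_eq_franel_gfI:
  assumes "\<And>a b c. franel_op f a b c = unit3 a b c"
  shows "series3 f = franel_gf"
proof (intro eq_franel_gfI coeff3_eqI)
  fix a b c
  show "coeff3 (series3 f * franel_denom) a b c = coeff3 1 a b c"
    using assms[of a b c] by (simp add: coeff3_mult_franel_denom unit3_def)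
qed

section \<open>The binomial transform\<close>

definition binomial_transform :: "'a::comm_semiring_1 \<Rightarrow> (nat \<Rightarrow> 'a) \<Rightarrow> nat \<Rightarrow> 'a" where
  "binomial_transform w h n = (\<Sum>m\<le>n. of_nat (n choose m) * w ^ (n - m) * h m)"

lemma binomial_transform_0 [simp]: "binomial_transform w h 0 = h 0"
  by (simp add: binomial_transform_def)

lemma binomial_transform_zero [simp]: "binomial_transform w (\<lambda>m. 0) n = 0"
  by (simp add: binomial_transform_def)

lemma binomial_transform_add:
  "binomial_transform w (\<lambda>m. h m + k m) n = binomial_transform w h n + binomial_transform w k n"
  by (simp add: binomial_transform_def sum.distrib algebra_simps)

lemma binomial_transform_diff:
  fixes w :: "'a::comm_ring_1"
  shows "binomial_transform w (\<lambda>m. h m - x * k m) n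
    = binomial_transform w h n - x * binomial_transform w k n"
  by (simp add: binomial_transform_def sum_subtractf sum_distrib_left algebra_simps)

lemma binomial_transform_Suc:
  "binomial_transform w h (Suc n)
     = w * binomial_transform w h n + binomial_transform w (\<lambda>m. h (Suc m)) n"
proof -
  have "binomial_transform w h (Suc n) = w ^ Suc n * h 0
      + (\<Sum>k\<le>n. of_nat (n choose Suc k) * w ^ (n - k) * h (Suc k))
      + (\<Sum>k\<le>n. of_nat (n choose k) * w ^ (n - k) * h (Suc k))"
    unfolding binomial_transform_def sum.atMost_Suc_shift by (simp add: sum.distrib algebra_simps)
  moreover have "w * binomial_transform w h n = w ^ Suc n * h 0
      + (\<Sum>k\<le>n. of_nat (n choose Suc k) * w ^ (n - k) * h (Suc k))"
  proof -
    have "w * binomial_transform w h n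
        = (\<Sum>m\<le>Suc n. of_nat (n choose m) * w ^ (Suc n - m) * h m)"
      unfolding binomial_transform_def sum_distrib_left
      by (simp add: Suc_diff_le binomial_eq_0 algebra_simps)
    then show ?thesis
      unfolding sum.atMost_Suc_shift by simp
  qed
  ultimately show ?thesis
    by (simp add: binomial_transform_def)
qed

(* On generating functions, transform1 maps F(x1) to F(x1/(1 - 2 x1))/(1 - 2 x1) and
   sub2shift1 is multiplication by 1 - 2 x1. *)
definition transform1 :: "array3 \<Rightarrow> array3" where
  "transform1 f a b c = binomial_transform 2 (\<lambda>m. f m b c) a"

definition transform2 :: "array3 \<Rightarrow> array3" where
  "transform2 f a b c = binomial_transform 2 (\<lambda>m. f a m c) b"

definition transform3 :: "array3 \<Rightarrow> array3" where
  "transform3 f a b c = binomial_transform 2 (\<lambda>m. f a b m) c"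

definition sub2shift1 :: "array3 \<Rightarrow> array3" where
  "sub2shift1 f a b c = f a b c - 2 * shift1 f a b c"

definition sub2shift2 :: "array3 \<Rightarrow> array3" where
  "sub2shift2 f a b c = f a b c - 2 * shift2 f a b c"

definition sub2shift3 :: "array3 \<Rightarrow> array3" where
  "sub2shift3 f a b c = f a b c - 2 * shift3 f a b c"

lemma shift1_transform1: "shift1 (transform1 f) = sub2shift1 (transform1 (shift1 f))"
proof (intro ext)
  fix a b c
  show "shift1 (transform1 f) a b c = sub2shift1 (transform1 (shift1 f)) a b c"
    by (cases a) (simp_all add: shift1_def sub2shift1_def transform1_def binomial_transform_Suc)
qed

lemma shift2_transform2: "shift2 (transform2 f) = sub2shift2 (transform2 (shift2 f))"
proof (intro ext)
  fix a b c
  show "shift2 (transform2 f) a b c = sub2shift2 (transform2 (shift2 f)) a b c"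
    by (cases b) (simp_all add: shift2_def sub2shift2_def transform2_def binomial_transform_Suc)
qed

lemma shift3_transform3: "shift3 (transform3 f) = sub2shift3 (transform3 (shift3 f))"
proof (intro ext)
  fix a b c
  show "shift3 (transform3 f) a b c = sub2shift3 (transform3 (shift3 f)) a b c"
    by (cases c) (simp_all add: shift3_def sub2shift3_def transform3_def binomial_transform_Suc)
qed

lemma shift1_transform2: "shift1 (transform2 f) = transform2 (shift1 f)"
  by (intro ext) (simp add: shift1_def transform2_def)
lemma shift1_transform3: "shift1 (transform3 f) = transform3 (shift1 f)"
  by (intro ext) (simp add: shift1_def transform3_def)
lemma shift2_transform1: "shift2 (transform1 f) = transform1 (shift2 f)"
  by (intro ext) (simp add: shift2_def transform1_def)
lemma shift2_transform3: "shift2 (transform3 f) = transform3 (shift2 f)"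
  by (intro ext) (simp add: shift2_def transform3_def)
lemma shift3_transform1: "shift3 (transform1 f) = transform1 (shift3 f)"
  by (intro ext) (simp add: shift3_def transform1_def)
lemma shift3_transform2: "shift3 (transform2 f) = transform2 (shift3 f)"
  by (intro ext) (simp add: shift3_def transform2_def)

lemma sub2shift1_transform2: "sub2shift1 (transform2 f) = transform2 (sub2shift1 f)"
  by (intro ext) (simp add: sub2shift1_def shift1_def transform2_def binomial_transform_diff)
lemma sub2shift1_transform3: "sub2shift1 (transform3 f) = transform3 (sub2shift1 f)"
  by (intro ext) (simp add: sub2shift1_def shift1_def transform3_def binomial_transform_diff)
lemma sub2shift2_transform1: "sub2shift2 (transform1 f) = transform1 (sub2shift2 f)"
  by (intro ext) (simp add: sub2shift2_def shift2_def transform1_def binomial_transform_diff)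
lemma sub2shift2_transform3: "sub2shift2 (transform3 f) = transform3 (sub2shift2 f)"
  by (intro ext) (simp add: sub2shift2_def shift2_def transform3_def binomial_transform_diff)
lemma sub2shift3_transform1: "sub2shift3 (transform1 f) = transform1 (sub2shift3 f)"
  by (intro ext) (simp add: sub2shift3_def shift3_def transform1_def binomial_transform_diff)
lemma sub2shift3_transform2: "sub2shift3 (transform2 f) = transform2 (sub2shift3 f)"
  by (intro ext) (simp add: sub2shift3_def shift3_def transform2_def binomial_transform_diff)

lemma shift1_sub2shift2: "shift1 (sub2shift2 f) = sub2shift2 (shift1 f)"
  by (intro ext) (simp add: sub2shift2_def shift1_def shift2_def)
lemma shift1_sub2shift3: "shift1 (sub2shift3 f) = sub2shift3 (shift1 f)"
  by (intro ext) (simp add: sub2shift3_def shift1_def shift3_def)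
lemma shift2_sub2shift1: "shift2 (sub2shift1 f) = sub2shift1 (shift2 f)"
  by (intro ext) (simp add: sub2shift1_def shift1_def shift2_def)
lemma shift2_sub2shift3: "shift2 (sub2shift3 f) = sub2shift3 (shift2 f)"
  by (intro ext) (simp add: sub2shift3_def shift2_def shift3_def)
lemma shift3_sub2shift1: "shift3 (sub2shift1 f) = sub2shift1 (shift3 f)"
  by (intro ext) (simp add: sub2shift1_def shift1_def shift3_def)
lemma shift3_sub2shift2: "shift3 (sub2shift2 f) = sub2shift2 (shift3 f)"
  by (intro ext) (simp add: sub2shift2_def shift2_def shift3_def)
lemma sub2shift3_sub2shift2: "sub2shift3 (sub2shift2 f) = sub2shift2 (sub2shift3 f)"
  by (intro ext) (simp add: sub2shift2_def sub2shift3_def shift2_def shift3_def algebra_simps)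

lemmas shift_transform_commute =
  shift1_transform2 shift1_transform3 shift2_transform1 shift2_transform3 shift3_transform1 shift3_transform2
  sub2shift1_transform2 sub2shift1_transform3 sub2shift2_transform1 sub2shift2_transform3
  sub2shift3_transform1 sub2shift3_transform2 shift1_sub2shift2 shift1_sub2shift3
  shift2_sub2shift1 shift2_sub2shift3 shift3_sub2shift1 shift3_sub2shift2 sub2shift3_sub2shift2

lemma sub2shift1_transform1_unit:
  assumes "\<And>a b c. 0 < a \<Longrightarrow> f a b c = 0"
  shows "sub2shift1 (transform1 f) = f"
proof (intro ext)
  fix a b c
  show "sub2shift1 (transform1 f) a b c = f a b c"
    using assms by (cases a) (simp_all add: sub2shift1_def shift1_def transform1_def binomial_transform_Suc)
qed

lemma sub2shift2_transform2_unit: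
  assumes "\<And>a b c. 0 < b \<Longrightarrow> f a b c = 0"
  shows "sub2shift2 (transform2 f) = f"
proof (intro ext)
  fix a b c
  show "sub2shift2 (transform2 f) a b c = f a b c"
    using assms by (cases b) (simp_all add: sub2shift2_def shift2_def transform2_def binomial_transform_Suc)
qed

lemma sub2shift3_transform3_unit:
  assumes "\<And>a b c. 0 < c \<Longrightarrow> f a b c = 0"
  shows "sub2shift3 (transform3 f) = f"
proof (intro ext)
  fix a b c
  show "sub2shift3 (transform3 f) a b c = f a b c"
    using assms by (cases c) (simp_all add: sub2shift3_def shift3_def transform3_def binomial_transform_Suc)
qed

(* Coefficientwise form of
     1 - s + 4 x1 x2 x3
       = (1-2x1)(1-2x2)(1-2x3) + x1(1-2x2)(1-2x3) + x2(1-2x1)(1-2x3) + x3(1-2x1)(1-2x2). *)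
lemma franel_op_decompose:
  "franel_op f a b c
     = sub2shift1 (sub2shift2 (sub2shift3 f)) a b c + shift1 (sub2shift2 (sub2shift3 f)) a b c
       + shift2 (sub2shift1 (sub2shift3 f)) a b c + shift3 (sub2shift1 (sub2shift2 f)) a b c"
  by (cases a; cases b; cases c)
    (simp_all add: franel_op_def sub2shift1_def sub2shift2_def sub2shift3_def
      shift1_def shift2_def shift3_def)

lemma franel_op_transform:
  assumes g: "\<And>a b c. g a b c + shift1 g a b c + shift2 g a b c + shift3 g a b c = unit3 a b c"
  shows "franel_op (transform1 (transform2 (transform3 g))) a b c = unit3 a b c"
proof -
  define L where
    "L h = sub2shift1 (sub2shift2 (sub2shift3 (transform1 (transform2 (transform3 h)))))" for h
  have L_add: "L (\<lambda>a b c. h a b c + k a b c) a b c = L h a b c + L k a b c" for h k a b c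
    by (simp add: L_def sub2shift1_def sub2shift2_def sub2shift3_def shift1_def shift2_def shift3_def
        transform1_def transform2_def transform3_def binomial_transform_add algebra_simps)
  have L_unit: "L unit3 = unit3"
  proof -
    have "L unit3 = sub2shift1 (transform1 (sub2shift2 (transform2 (sub2shift3 (transform3 unit3)))))"
      by (simp add: L_def shift_transform_commute)
    also have "\<dots> = unit3"
      by (simp add: sub2shift1_transform1_unit sub2shift2_transform2_unit sub2shift3_transform3_unit
          unit3_def)
    finally show ?thesis .
  qed
  have "franel_op (transform1 (transform2 (transform3 g))) a b c
      = L g a b c + L (shift1 g) a b c + L (shift2 g) a b c + L (shift3 g) a b c"
    unfolding franel_op_decompose L_def
    by (simp add: shift1_transform1 shift2_transform2 shift3_transform3 shift_transform_commute)
  also have "\<dots> = L unit3 a b c"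
    by (simp add: L_add[symmetric] g)
  finally show ?thesis
    by (simp add: L_unit)
qed

section \<open>The product of the three linear forms\<close>

(* (-1)^(a+b+c) (a+b+c)!/(a! b! c!), the coefficient array of 1/(1 + x1 + x2 + x3). *)
definition signed_multinomial :: array3 where
  "signed_multinomial a b c = coeff3 ((- (X1 + X2 + X3)) ^ (a + b + c)) a b c"

lemma signed_multinomial_rec:
  "signed_multinomial a b c + shift1 signed_multinomial a b c + shift2 signed_multinomial a b c
     + shift3 signed_multinomial a b c = unit3 a b c"
proof (cases "a + b + c")
  case 0
  then show ?thesis
    by (simp add: signed_multinomial_def shift1_def shift2_def shift3_def unit3_def)
next
  case (Suc N)
  let ?P = "(- (X1 + X2 + X3)) ^ N"
  have "(- (X1 + X2 + X3)) ^ Suc N = - (X1 * ?P) - X2 * ?P - X3 * ?P"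
    by (simp add: algebra_simps)
  moreover have "shift1 signed_multinomial a b c = (if a = 0 then 0 else coeff3 ?P (a - 1) b c)"
    using Suc by (cases a) (simp_all add: shift1_def signed_multinomial_def)
  moreover have "shift2 signed_multinomial a b c = (if b = 0 then 0 else coeff3 ?P a (b - 1) c)"
    using Suc by (cases b) (simp_all add: shift2_def signed_multinomial_def)
  moreover have "shift3 signed_multinomial a b c = (if c = 0 then 0 else coeff3 ?P a b (c - 1))"
    using Suc by (cases c) (simp_all add: shift3_def signed_multinomial_def)
  ultimately show ?thesis
    using Suc by (simp add: signed_multinomial_def unit3_def)
qed

lemma power_add_const3_mult:
  "(Y + const3 w * Z) ^ a
     = (\<Sum>i\<le>a. const3 (of_nat (a choose i) * w ^ (a - i)) * (Z ^ (a - i) * Y ^ i))"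
  unfolding binomial_ring
  by (intro sum.cong refl)
    (simp add: of_nat_fps3 power_mult_distrib fps_const_mult[symmetric] fps_const_power ac_simps
      del: fps_const_mult)

lemma sum_product3:
  "sum f A * sum g B * sum h C
     = (\<Sum>i\<in>A. \<Sum>j\<in>B. \<Sum>k\<in>C. f i * g j * (h k :: 'a::comm_semiring_0))"
  unfolding sum_distrib_left[symmetric] sum_distrib_right[symmetric] ..

lemma coeff3_linear_forms_product:
  "coeff3 ((X1 - X2 - X3) ^ a * (X2 - X1 - X3) ^ b * (X3 - X1 - X2) ^ c) a b c
     = transform1 (transform2 (transform3 signed_multinomial)) a b c"
proof -
  let ?Y = "- (X1 + X2 + X3)"
  have forms: "X1 - X2 - X3 = ?Y + const3 2 * X1" "X2 - X1 - X3 = ?Y + const3 2 * X2"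
    "X3 - X1 - X2 = ?Y + const3 2 * X3"
    by (simp_all add: numeral_fps3[symmetric])
  have summand: "coeff3 (const3 x * (X1 ^ (a - i) * ?Y ^ i) * (const3 y * (X2 ^ (b - j) * ?Y ^ j))
        * (const3 z * (X3 ^ (c - k) * ?Y ^ k))) a b c = x * (y * (z * signed_multinomial i j k))"
    if "i \<le> a" "j \<le> b" "k \<le> c" for x y z i j k
  proof -
    have regroup: "const3 x * (X1 ^ (a - i) * ?Y ^ i) * (const3 y * (X2 ^ (b - j) * ?Y ^ j))
          * (const3 z * (X3 ^ (c - k) * ?Y ^ k))
        = const3 (x * (y * z)) * (X1 ^ (a - i) * (X2 ^ (b - j) * (X3 ^ (c - k) * ?Y ^ (i + j + k))))"
      by (simp add: power_add fps_const_mult[symmetric] ac_simps del: fps_const_mult)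
    show ?thesis
      unfolding regroup using that
      by (auto simp: coeff3_X1_power_mult coeff3_X2_power_mult coeff3_X3_power_mult signed_multinomial_def)
  qed
  show ?thesis
    unfolding forms power_add_const3_mult sum_product3 coeff3_sum
    unfolding transform1_def transform2_def transform3_def binomial_transform_def sum_distrib_left
    by (intro sum.cong refl, subst summand) (simp_all add: mult.assoc)
qed

section \<open>Explicit coefficients of the generating function\<close>

definition multinomial4 :: "nat \<Rightarrow> nat \<Rightarrow> nat \<Rightarrow> nat \<Rightarrow> rat" where
  "multinomial4 j p q r = fact (j + p + q + r) / (fact j * fact p * fact q * fact r)"

lemma multinomial4_pascal:
  assumes "j + p + q + r = Suc m"
  shows "multinomial4 j p q r = (if j = 0 then 0 else multinomial4 (j - 1) p q r)
     + (if p = 0 then 0 else multinomial4 j (p - 1) q r)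
     + (if q = 0 then 0 else multinomial4 j p (q - 1) r)
     + (if r = 0 then 0 else multinomial4 j p q (r - 1))"
proof -
  have "(fact (j + p + q + r) :: rat) = of_nat (j + p + q + r) * fact m"
    unfolding assms by simp
  then have "multinomial4 j p q r
      = (of_nat j + of_nat p + of_nat q + of_nat r) * fact m / (fact j * fact p * fact q * fact r)"
    by (simp add: multinomial4_def)
  also have "\<dots> = of_nat j * fact m / (fact j * (fact p * fact q * fact r))
      + of_nat p * fact m / (fact p * (fact j * fact q * fact r))
      + of_nat q * fact m / (fact q * (fact j * fact p * fact r))
      + of_nat r * fact m / (fact r * (fact j * fact p * fact q))"
    by (simp add: add_divide_distrib[symmetric] distrib_left ac_simps)
  also have "of_nat j * fact m / (fact j * (fact p * fact q * fact r))
      = (if j = 0 then 0 else multinomial4 (j - 1) p q r)"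
    using assms by (cases j) (simp_all add: multinomial4_def mult.assoc)
  also have "of_nat p * fact m / (fact p * (fact j * fact q * fact r))
      = (if p = 0 then 0 else multinomial4 j (p - 1) q r)"
    using assms by (cases p) (simp_all add: multinomial4_def ac_simps)
  also have "of_nat q * fact m / (fact q * (fact j * fact p * fact r))
      = (if q = 0 then 0 else multinomial4 j p (q - 1) r)"
    using assms by (cases q) (simp_all add: multinomial4_def ac_simps)
  also have "of_nat r * fact m / (fact r * (fact j * fact p * fact q))
      = (if r = 0 then 0 else multinomial4 j p q (r - 1))"
    using assms by (cases r) (simp_all add: multinomial4_def ac_simps)
  finally show ?thesis .
qed

(* The coefficient array of (-4 x1 x2 x3)^j / (1 - x1 - x2 - x3)^(j+1). *)
definition franel_gf_term :: "nat \<Rightarrow> array3" where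
  "franel_gf_term j a b c =
     (if j \<le> a \<and> j \<le> b \<and> j \<le> c then (-4) ^ j * multinomial4 j (a - j) (b - j) (c - j) else 0)"

definition franel_gf_coeff :: array3 where
  "franel_gf_coeff a b c = (\<Sum>j\<le>a. franel_gf_term j a b c)"

lemma franel_gf_term_rec:
  "franel_gf_term j a b c - shift1 (franel_gf_term j) a b c - shift2 (franel_gf_term j) a b c
     - shift3 (franel_gf_term j) a b c
   = (if j = 0 then unit3 a b c else - (4 * shift1 (shift2 (shift3 (franel_gf_term (j - 1)))) a b c))"
proof (cases "j \<le> a \<and> j \<le> b \<and> j \<le> c")
  case False
  then show ?thesis
    by (auto simp: franel_gf_term_def shift1_def shift2_def shift3_def unit3_def)
next
  case True
  have t: "franel_gf_term j a b c = (-4) ^ j * multinomial4 j (a - j) (b - j) (c - j)"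
    using True by (simp add: franel_gf_term_def)
  have t1: "shift1 (franel_gf_term j) a b c
      = (-4) ^ j * (if a - j = 0 then 0 else multinomial4 j (a - j - 1) (b - j) (c - j))"
    using True by (auto simp: franel_gf_term_def shift1_def)
  have t2: "shift2 (franel_gf_term j) a b c
      = (-4) ^ j * (if b - j = 0 then 0 else multinomial4 j (a - j) (b - j - 1) (c - j))"
    using True by (auto simp: franel_gf_term_def shift2_def)
  have t3: "shift3 (franel_gf_term j) a b c
      = (-4) ^ j * (if c - j = 0 then 0 else multinomial4 j (a - j) (b - j) (c - j - 1))"
    using True by (auto simp: franel_gf_term_def shift3_def)
  show ?thesis
  proof (cases j)
    case 0
    show ?thesis
    proof (cases "a + b + c")
      case 0
      then show ?thesis
        unfolding t t1 t2 t3 using \<open>j = 0\<close> by (simp add: unit3_def multinomial4_def)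
    next
      case (Suc m)
      then show ?thesis
        unfolding t t1 t2 t3 using \<open>j = 0\<close> multinomial4_pascal[of 0 a b c m]
        by (simp add: unit3_def)
    qed
  next
    case (Suc i)
    have "shift1 (shift2 (shift3 (franel_gf_term i))) a b c
        = (-4) ^ i * multinomial4 i (a - j) (b - j) (c - j)"
      using True Suc by (auto simp: franel_gf_term_def shift1_def shift2_def shift3_def)
    then show ?thesis
      unfolding t t1 t2 t3
      using Suc multinomial4_pascal[of j "a - j" "b - j" "c - j" "i + (a - j) + (b - j) + (c - j)"]
      by (simp add: algebra_simps)
  qed
qed

lemma sum_atMost_telescope_shift:
  fixes g :: "nat \<Rightarrow> 'a::ab_group_add"
  shows "(\<Sum>j\<le>n. (if j = 0 then x else - g (j - 1)) + g j) = x + g n"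
  by (induction n) simp_all

lemma franel_op_franel_gf_coeff: "franel_op franel_gf_coeff a b c = unit3 a b c"
proof -
  let ?t = franel_gf_term
  have shifted:
    "shift1 franel_gf_coeff a b c = (\<Sum>j\<le>a. shift1 (?t j) a b c)"
    "shift2 franel_gf_coeff a b c = (\<Sum>j\<le>a. shift2 (?t j) a b c)"
    "shift3 franel_gf_coeff a b c = (\<Sum>j\<le>a. shift3 (?t j) a b c)"
    "shift1 (shift2 (shift3 franel_gf_coeff)) a b c
       = (\<Sum>j\<le>a. shift1 (shift2 (shift3 (?t j))) a b c)"
    by (cases a; cases b; cases c;
        simp add: shift1_def shift2_def shift3_def franel_gf_coeff_def franel_gf_term_def)+
  have "franel_op franel_gf_coeff a b c
      = (\<Sum>j\<le>a. (if j = 0 then unit3 a b c else - (4 * shift1 (shift2 (shift3 (?t (j - 1)))) a b c))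
          + 4 * shift1 (shift2 (shift3 (?t j))) a b c)"
    unfolding franel_op_def shifted franel_gf_term_rec[symmetric]
    by (simp add: franel_gf_coeff_def sum.distrib sum_subtractf sum_distrib_left)
  also have "\<dots> = unit3 a b c + 4 * shift1 (shift2 (shift3 (?t a))) a b c"
    using sum_atMost_telescope_shift[of _ "\<lambda>j. 4 * shift1 (shift2 (shift3 (?t j))) a b c"] by simp
  also have "shift1 (shift2 (shift3 (?t a))) a b c = 0"
    by (auto simp: shift1_def shift2_def shift3_def franel_gf_term_def)
  finally show ?thesis by simp
qed

definition franel_diag_term :: "nat \<Rightarrow> nat \<Rightarrow> rat" where
  "franel_diag_term n i =
     (if i \<le> n then (-4) ^ (n - i) * fact (n + 2 * i) / (fact (n - i) * fact i ^ 3) else 0)"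

lemma franel_gf_coeff_diag: "franel_gf_coeff n n n = (\<Sum>i\<le>n. franel_diag_term n i)"
proof -
  have "franel_gf_coeff n n n = (\<Sum>j=0..n. franel_gf_term j n n n)"
    by (simp add: franel_gf_coeff_def atLeast0AtMost)
  also have "\<dots> = (\<Sum>i=0..n. franel_gf_term (n + 0 - i) n n n)"
    by (rule sum.atLeastAtMost_rev)
  also have "\<dots> = (\<Sum>i=0..n. franel_diag_term n i)"
  proof (intro sum.cong refl)
    fix i assume "i \<in> {0..n}"
    then have "n - (n - i) = i" "n - i + i + i + i = n + 2 * i"
      by auto
    then show "franel_gf_term (n + 0 - i) n n n = franel_diag_term n i"
      by (simp add: franel_gf_term_def franel_diag_term_def multinomial4_def power3_eq_cube mult_ac)
        (simp add: mult_2_right add.assoc)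
  qed
  finally show ?thesis
    by (simp add: atLeast0AtMost)
qed

section \<open>Creative telescoping\<close>

lemma sum_recurrence_by_telescoping:
  fixes t :: "nat \<Rightarrow> nat \<Rightarrow> 'a::comm_ring_1"
  assumes telescoping: "\<And>i. a * t (n + 2) i - b * t (n + 1) i - c * t n i = H (Suc i) - H i"
    and "H 0 = 0" "H (n + 3) = 0"
    and vanish: "\<And>m i. m < i \<Longrightarrow> t m i = 0"
  shows "a * (\<Sum>i\<le>n + 2. t (n + 2) i)
    = b * (\<Sum>i\<le>n + 1. t (n + 1) i) + c * (\<Sum>i\<le>n. t n i)"
proof -
  have extend: "(\<Sum>i\<le>m. t m i) = (\<Sum>i<n + 3. t m i)" if "m \<le> n + 2" for m
    using that vanish by (intro sum.mono_neutral_left) auto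
  have "(\<Sum>i<n + 3. a * t (n + 2) i - b * t (n + 1) i - c * t n i) = H (n + 3) - H 0"
    unfolding telescoping by (rule sum_lessThan_telescope)
  then have "a * (\<Sum>i<n + 3. t (n + 2) i)
      = b * (\<Sum>i<n + 3. t (n + 1) i) + c * (\<Sum>i<n + 3. t n i)"
    using assms(2,3) by (simp add: sum_subtractf sum.distrib sum_distrib_left algebra_simps)
  then show ?thesis
    using extend[of n] extend[of "n + 1"] extend[of "n + 2"] by simp
qed

lemma linear_recurrence_unique:
  fixes u v :: "nat \<Rightarrow> 'a::field"
  assumes "\<And>n. p n \<noteq> 0"
    and "\<And>n. p n * u (n + 2) = q n * u (n + 1) + r n * u n"
    and "\<And>n. p n * v (n + 2) = q n * v (n + 1) + r n * v n"
    and "u 0 = v 0" "u 1 = v 1"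
  shows "u n = v n"
proof -
  have "u n = v n \<and> u (n + 1) = v (n + 1)"
  proof (induction n)
    case 0
    then show ?case
      using assms(4,5) by simp
  next
    case (Suc n)
    then have "p n * u (n + 2) = p n * v (n + 2)"
      using assms(2,3) by simp
    then show ?case
      using Suc assms(1) by simp
  qed
  then show ?thesis ..
qed

(* franel_diag_cert is Zeilberger's certificate for the diagonal sum; every term of the
   telescoping identity is a polynomial multiple of franel_diag_base. *)
definition franel_diag_base :: "nat \<Rightarrow> nat \<Rightarrow> rat" where
  "franel_diag_base n i = (-4) ^ (n + 2 - i) * fact (n + 2 * i) / (16 * fact i ^ 3 * fact (n + 2 - i))"

definition franel_diag_cert :: "nat \<Rightarrow> nat \<Rightarrow> rat" where
  "franel_diag_cert n i =
     (if i \<le> n + 2 then - 48 * (3 * of_nat n + 5) * of_nat i ^ 3 * franel_diag_base n i else 0)"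

lemma fact_add_1: "(fact (k + 1) :: 'a::semiring_char_0) = (of_nat k + 1) * fact k"
  by (simp add: algebra_simps)

lemma fact_add_2: "(fact (k + 2) :: 'a::semiring_char_0) = (of_nat k + 2) * (of_nat k + 1) * fact k"
  by (simp add: numeral_2_eq_2 mult_2 algebra_simps)

lemma franel_diag_term_eq:
  assumes "n + 2 = i + m"
  shows "franel_diag_term n i = of_nat m * (of_nat m - 1) * franel_diag_base n i"
proof (cases "i \<le> n")
  case True
  then have "m = (n - i) + 2" "n + 2 - i = (n - i) + 2" using assms by linarith+
  then show ?thesis using True
    by (simp add: franel_diag_term_def franel_diag_base_def fact_add_2 power_add divide_simps
        del: of_nat_Suc)
next
  case False
  then have "m = 0 \<or> m = 1" using assms by linarith
  then show ?thesis using False by (auto simp: franel_diag_term_def)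
qed

lemma franel_diag_term_add_1_eq:
  assumes "n + 2 = i + m"
  shows "franel_diag_term (n + 1) i
    = - 4 * (of_nat n + 2 * of_nat i + 1) * of_nat m * franel_diag_base n i"
proof (cases "i \<le> n + 1")
  case True
  then have "m = (n + 1 - i) + 1" "n + 2 - i = (n + 1 - i) + 1" "n + 1 + 2 * i = (n + 2 * i) + 1"
    using assms by linarith+
  then show ?thesis using True
    by (simp add: franel_diag_term_def franel_diag_base_def fact_add_1 power_add divide_simps
        del: of_nat_Suc)
       (simp add: algebra_simps)
next
  case False
  then have "m = 0" using assms by linarith
  then show ?thesis using False by (auto simp: franel_diag_term_def)
qed

lemma franel_diag_term_add_2_eq:
  assumes "n + 2 = i + m"
  shows "franel_diag_term (n + 2) i
    = 16 * (of_nat n + 2 * of_nat i + 1) * (of_nat n + 2 * of_nat i + 2) * franel_diag_base n i"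
proof -
  have "n + 2 + 2 * i = (n + 2 * i) + 2" "i \<le> n + 2" using assms by linarith+
  then show ?thesis
    by (simp add: franel_diag_term_def franel_diag_base_def fact_add_2 divide_simps del: of_nat_Suc)
       (simp add: algebra_simps)
qed

lemma franel_diag_cert_Suc_eq:
  assumes "n + 2 = i + m"
  shows "franel_diag_cert n (Suc i)
    = 12 * (3 * of_nat n + 5) * (of_nat n + 2 * of_nat i + 1) * (of_nat n + 2 * of_nat i + 2)
      * of_nat m * franel_diag_base n i"
proof (cases m)
  case 0
  then show ?thesis using assms by (simp add: franel_diag_cert_def)
next
  case (Suc k)
  then have "n + 2 - Suc i = k" "n + 2 - i = k + 1" "n + 2 * Suc i = n + 2 * i + 2" "Suc i \<le> n + 2"
    using assms by auto
  then show ?thesis using Suc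
    by (simp add: franel_diag_cert_def franel_diag_base_def fact_add_2 power_add power_mult_distrib divide_simps
        del: of_nat_Suc)
       (simp add: algebra_simps power3_eq_cube)
qed

lemma franel_diag_term_telescoping:
  "(of_nat n + 2) ^ 2 * franel_diag_term (n + 2) i
     - (7 * of_nat n ^ 2 + 21 * of_nat n + 16) * franel_diag_term (n + 1) i
     - 8 * (of_nat n + 1) ^ 2 * franel_diag_term n i
   = franel_diag_cert n (Suc i) - franel_diag_cert n i"
proof (cases "i \<le> n + 2")
  case True
  define m where "m = n + 2 - i"
  then have m: "n + 2 = i + m" "of_nat m = (of_nat n + 2 - of_nat i :: rat)"
    using True by (simp_all add: of_nat_diff)
  show ?thesis
    unfolding franel_diag_term_eq[OF m(1)] franel_diag_term_add_1_eq[OF m(1)]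
      franel_diag_term_add_2_eq[OF m(1)] franel_diag_cert_Suc_eq[OF m(1)] m(2)
    using True by (simp add: franel_diag_cert_def algebra_simps power2_eq_square power3_eq_cube)
next
  case False
  then show ?thesis by (simp add: franel_diag_term_def franel_diag_cert_def)
qed

(* The same for the sum of cubed binomial coefficients. *)
definition franel_summand_base :: "nat \<Rightarrow> nat \<Rightarrow> rat" where
  "franel_summand_base n k = of_nat ((n + 2) choose k) / ((of_nat n + 2) * (of_nat n + 1))"

definition franel_summand_cert_poly :: "nat \<Rightarrow> nat \<Rightarrow> rat" where
  "franel_summand_cert_poly n k =
     - (14 * of_nat n ^ 3 + 74 * of_nat n ^ 2 + 128 * of_nat n + 72)
     + (27 * of_nat n ^ 2 + 93 * of_nat n + 78) * of_nat k - (18 * of_nat n + 30) * of_nat k ^ 2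
     + 4 * of_nat k ^ 3"

definition franel_summand_cert :: "nat \<Rightarrow> nat \<Rightarrow> rat" where
  "franel_summand_cert n k = franel_summand_cert_poly n k * (of_nat k * of_nat ((n + 2) choose k)) ^ 3
     / ((of_nat n + 2) ^ 3 * (of_nat n + 1))"

lemma of_nat_add_2_neq_0: "(of_nat n + 2 :: 'a::linordered_semidom) \<noteq> 0"
  using add_nonneg_pos[of "of_nat n" "2::'a"] by simp

lemma choose_add_2_eq_franel_summand_base:
  "of_nat ((n + 2) choose k) = (of_nat n + 2) * (of_nat n + 1) * franel_summand_base n k"
  by (simp add: franel_summand_base_def of_nat_add_2_neq_0)

lemma choose_add_1_eq_franel_summand_base:
  assumes "n + 2 = k + m"
  shows "of_nat ((n + 1) choose k) = (of_nat n + 1) * of_nat m * franel_summand_base n k"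
proof -
  have "m = n + 2 - k"
    using assms by simp
  then have "(n + 2) * ((n + 1) choose k) = m * ((n + 2) choose k)"
    using binomial_absorb_comp[of "n + 2" k] by simp
  then have "of_nat ((n + 2) * ((n + 1) choose k)) = (of_nat (m * ((n + 2) choose k)) :: rat)"
    by (simp only:)
  then have "(of_nat n + 2) * of_nat ((n + 1) choose k) = of_nat m * (of_nat ((n + 2) choose k) :: rat)"
    by (simp add: algebra_simps)
  then have "(of_nat n + 2) * of_nat ((n + 1) choose k)
      = (of_nat n + 2) * ((of_nat n + 1) * of_nat m * franel_summand_base n k)"
    unfolding choose_add_2_eq_franel_summand_base by (simp add: ac_simps)
  then show ?thesis
    by (simp add: of_nat_add_2_neq_0)
qed

lemma choose_eq_franel_summand_base:
  assumes "n + 2 = k + m"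
  shows "of_nat (n choose k) = of_nat m * (of_nat m - 1) * franel_summand_base n k"
proof (cases m)
  case 0
  then show ?thesis
    using assms by (simp add: binomial_eq_0)
next
  case (Suc l)
  then have "l = n + 1 - k"
    using assms by simp
  then have "(n + 1) * (n choose k) = l * ((n + 1) choose k)"
    using binomial_absorb_comp[of "n + 1" k] by simp
  then have "of_nat ((n + 1) * (n choose k)) = (of_nat (l * ((n + 1) choose k)) :: rat)"
    by (simp only:)
  then have "(of_nat n + 1) * of_nat (n choose k) = of_nat l * (of_nat ((n + 1) choose k) :: rat)"
    by (simp add: algebra_simps)
  then have "(of_nat n + 1) * of_nat (n choose k)
      = (of_nat n + 1) * (of_nat m * (of_nat m - 1) * franel_summand_base n k)"
    unfolding choose_add_1_eq_franel_summand_base[OF assms] Suc by (simp add: algebra_simps)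
  then show ?thesis
    by (simp add: add_nonneg_pos)
qed

lemma franel_summand_cert_eq:
  "franel_summand_cert n k
     = franel_summand_cert_poly n k * of_nat k ^ 3 * (of_nat n + 1) ^ 2 * franel_summand_base n k ^ 3"
  unfolding franel_summand_cert_def choose_add_2_eq_franel_summand_base
  by (simp add: of_nat_add_2_neq_0 add_nonneg_pos divide_simps power_mult_distrib)
    (simp add: algebra_simps power2_eq_square power3_eq_cube)

lemma franel_summand_cert_Suc_eq:
  assumes "n + 2 = k + m"
  shows "franel_summand_cert n (Suc k)
    = franel_summand_cert_poly n (Suc k) * of_nat m ^ 3 * (of_nat n + 1) ^ 2 * franel_summand_base n k ^ 3"
proof -
  have "Suc k * ((n + 2) choose Suc k) = (n + 2) * ((n + 1) choose k)"
    using binomial_absorption[of k "n + 2"] by simp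
  then have "of_nat (Suc k * ((n + 2) choose Suc k)) = (of_nat ((n + 2) * ((n + 1) choose k)) :: rat)"
    by (simp only:)
  then have "of_nat (Suc k) * of_nat ((n + 2) choose Suc k)
      = of_nat (n + 2) * (of_nat ((n + 1) choose k) :: rat)"
    by (simp only: of_nat_mult)
  then show ?thesis
    unfolding franel_summand_cert_def choose_add_1_eq_franel_summand_base[OF assms]
    by (simp add: of_nat_add_2_neq_0 add_nonneg_pos divide_simps power_mult_distrib)
      (simp add: algebra_simps power2_eq_square power3_eq_cube)
qed

lemma franel_summand_telescoping:
  "(of_nat n + 2) ^ 2 * of_nat ((n + 2) choose k) ^ 3
     - (7 * of_nat n ^ 2 + 21 * of_nat n + 16) * of_nat ((n + 1) choose k) ^ 3
     - 8 * (of_nat n + 1) ^ 2 * of_nat (n choose k) ^ 3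
   = franel_summand_cert n (Suc k) - (franel_summand_cert n k :: rat)"
proof (cases "k \<le> n + 2")
  case True
  define m where "m = n + 2 - k"
  then have m: "n + 2 = k + m" "of_nat k = (of_nat n + 2 - of_nat m :: rat)"
    using True by (simp_all add: of_nat_diff)
  show ?thesis
    unfolding choose_add_2_eq_franel_summand_base choose_add_1_eq_franel_summand_base[OF m(1)]
      choose_eq_franel_summand_base[OF m(1)] franel_summand_cert_eq[of n k]
      franel_summand_cert_Suc_eq[OF m(1)] franel_summand_cert_poly_def of_nat_Suc m(2)
    by (simp add: algebra_simps power2_eq_square power3_eq_cube)
next
  case False
  then show ?thesis
    by (simp add: franel_summand_cert_def binomial_eq_0)
qed

lemma franel_diag_sum_rec:
  "(of_nat n + 2) ^ 2 * (\<Sum>i\<le>n + 2. franel_diag_term (n + 2) i)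
     = (7 * of_nat n ^ 2 + 21 * of_nat n + 16) * (\<Sum>i\<le>n + 1. franel_diag_term (n + 1) i)
       + 8 * (of_nat n + 1) ^ 2 * (\<Sum>i\<le>n. franel_diag_term n i)"
  by (rule sum_recurrence_by_telescoping[where t = franel_diag_term and H = "franel_diag_cert n"],
      rule franel_diag_term_telescoping)
    (simp_all add: franel_diag_cert_def franel_diag_term_def)

lemma franel_sum_rec:
  "(of_nat n + 2) ^ 2 * (\<Sum>k\<le>n + 2. of_nat ((n + 2) choose k) ^ 3)
     = (7 * of_nat n ^ 2 + 21 * of_nat n + 16) * (\<Sum>k\<le>n + 1. of_nat ((n + 1) choose k) ^ 3)
       + 8 * (of_nat n + 1) ^ 2 * (\<Sum>k\<le>n. of_nat (n choose k) ^ 3 :: rat)"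
  by (rule sum_recurrence_by_telescoping[where t = "\<lambda>n k. of_nat (n choose k) ^ 3"
        and H = "franel_summand_cert n"], rule franel_summand_telescoping)
    (simp_all add: franel_summand_cert_def binomial_eq_0)

lemma franel_diag_sum_eq: "(\<Sum>i\<le>n. franel_diag_term n i) = (\<Sum>k\<le>n. of_nat (n choose k) ^ 3)"
  by (rule linear_recurrence_unique[where u = "\<lambda>n. \<Sum>i\<le>n. franel_diag_term n i"
        and v = "\<lambda>n. \<Sum>k\<le>n. of_nat (n choose k) ^ 3"
        and p = "\<lambda>n. (of_nat n + 2) ^ 2" and q = "\<lambda>n. 7 * of_nat n ^ 2 + 21 * of_nat n + 16"
        and r = "\<lambda>n. 8 * (of_nat n + 1) ^ 2"])
    (simp add: of_nat_add_2_neq_0, fact franel_diag_sum_rec, fact franel_sum_rec,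
      simp_all add: franel_diag_term_def)

theorem mainTheorem8:
  shows "(\<forall>n::nat. of_nat (\<Sum>k=0..n. (n choose k) ^ 3) = coeff3 franel_gf n n n) \<and>
         (\<forall>n1 n2 n3::nat. coeff3 franel_gf n1 n2 n3 =
             coeff3 ((X1 - X2 - X3) ^ n1 * (X2 - X1 - X3) ^ n2 * (X3 - X1 - X2) ^ n3) n1 n2 n3)"
proof (intro conjI allI)
  fix n :: nat
  have "coeff3 franel_gf n n n = franel_gf_coeff n n n"
    using series3_eq_franel_gfI[OF franel_op_franel_gf_coeff] by (metis coeff3_series3)
  also have "\<dots> = (\<Sum>k\<le>n. of_nat (n choose k) ^ 3)"
    by (simp add: franel_gf_coeff_diag franel_diag_sum_eq)
  finally show "of_nat (\<Sum>k=0..n. (n choose k) ^ 3) = coeff3 franel_gf n n n"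
    by (simp add: atLeast0AtMost)
next
  fix n1 n2 n3 :: nat
  have "series3 (transform1 (transform2 (transform3 signed_multinomial))) = franel_gf"
    by (intro series3_eq_franel_gfI franel_op_transform signed_multinomial_rec)
  then show "coeff3 franel_gf n1 n2 n3 =
      coeff3 ((X1 - X2 - X3) ^ n1 * (X2 - X1 - X3) ^ n2 * (X3 - X1 - X2) ^ n3) n1 n2 n3"
    by (metis coeff3_linear_forms_product coeff3_series3)
qed

end
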